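(* Let $(X,\perp,Y,T)$ be an implicative frame. Then the operation $\blacktriangleright:\mathcal{G}(X)\times\mathcal{G}(Y)\to\mathcal{G}(Y)$ distributes over arbitrary joins of Galois sets in each argument place: for any families $A_i\in\mathcal{G}(X)$ ($i\in I$) and $B_j\in\mathcal{G}(Y)$ ($j\in J$), $\left(\bigvee_{i\in I}A_i\right)\blacktriangleright\left(\bigvee_{j\in J}B_j\right)=\bigvee_{i\in I,j\in J}(A_i\blacktriangleright B_j)$.
   Context: A sorted frame (polarity) is a triple $(X,\perp,Y)$ with $X,Y$ nonempty sets and ${\perp}\subseteq X\times Y$. For $U\subseteq X$ let $U'=\{y\in Y:\forall x\in U\ x\perp y\}$, and for $V\subseteq Y$ let ${}'V=\{x\in X:\forall y\in V\ x\perp y\}$. $A\subseteq X$ is stable if $A={}'(A')$; $B\subseteq Y$ is co-stable if $B=({}'B)'$. $\mathcal{G}(X)$, $\mathcal{G}(Y)$ are the complete lattices of stable, resp. co-stable, sets under inclusion (meets are intersections; the join of a family is the closure of its union, where the closure of $W\subseteq X$ is ${}'(W')$ and of $W\subseteq Y$ is $W''=({}'W)'$). Preorders: for $x,z\in X$, $x\le z$ iff $\{x\}'\subseteq\{z\}'$; for $y,v\in Y$, $y\le v$ iff ${}'\{y\}\subseteq{}'\{v\}$; the frame is separated if both are partial orders. $\Gamma u$ is the set of elements (of the same sort) above $u$. For $T\subseteq Y\times X\times Y$ (write $yTxv$), its Galois dual $T'\subseteq X\times X\times Y$ is given by $uT'xv$ iff $\forall y\in Y\,(yTxv\Rightarrow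 u\perp y)$. An implicative frame is $(X,\perp,Y,T)$ with $T\subseteq Y\times X\times Y$ such that: (F0) for all $x\in X,y\in Y$: $x\perp y$ iff $uT'xy$ for all $u\in X$; (F1) the frame is separated; (F2) for all $x\in X,v\in Y$ the set $\{y\in Y: yTxv\}$ equals $\Gamma w$ for some $w\in Y$; (F3) for each $y\in Y$, if $yTxv$, $x_1\le x$ and $v_1\le v$ then $yTx_1v_1$; (F4) for all $u,x\in X$ and $v\in Y$, the set $\{x_1\in X:uT'x_1v\}$ is stable and the set $\{v_1\in Y:uT'xv_1\}$ is co-stable. For $A\in\mathcal{G}(X)$, $B\in\mathcal{G}(Y)$ define $A\blacktriangleright B=\left(\{y\in Y:\exists x\in A\,\exists v\in B\ yTxv\}\right)''$. *)

theory Defs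
  imports Main
begin

text \<open>A sorted frame (X, perp, Y) with explicit carrier sets X, Y; the relation
  perp is given as a predicate R and the ternary relation T as a predicate
  (T y x v means y T x v).\<close>

definition rpol :: "'x set \<Rightarrow> 'y set \<Rightarrow> ('x \<Rightarrow> 'y \<Rightarrow> bool) \<Rightarrow> 'x set \<Rightarrow> 'y set" where
  "rpol X Y R U = {y \<in> Y. \<forall>x\<in>U. R x y}"

definition lpol :: "'x set \<Rightarrow> 'y set \<Rightarrow> ('x \<Rightarrow> 'y \<Rightarrow> bool) \<Rightarrow> 'y set \<Rightarrow> 'x set" where
  "lpol X Y R V = {x \<in> X. \<forall>y\<in>V. R x y}"

definition stable :: "'x set \<Rightarrow> 'y set \<Rightarrow> ('x \<Rightarrow> 'y \<Rightarrow> bool) \<Rightarrow> 'x set \<Rightarrow> bool" where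
  "stable X Y R A \<longleftrightarrow> A = lpol X Y R (rpol X Y R A)"

definition costable :: "'x set \<Rightarrow> 'y set \<Rightarrow> ('x \<Rightarrow> 'y \<Rightarrow> bool) \<Rightarrow> 'y set \<Rightarrow> bool" where
  "costable X Y R B \<longleftrightarrow> B = rpol X Y R (lpol X Y R B)"

definition joinX :: "'x set \<Rightarrow> 'y set \<Rightarrow> ('x \<Rightarrow> 'y \<Rightarrow> bool) \<Rightarrow> 'x set set \<Rightarrow> 'x set" where
  "joinX X Y R F = lpol X Y R (rpol X Y R (\<Union>F))"

definition joinY :: "'x set \<Rightarrow> 'y set \<Rightarrow> ('x \<Rightarrow> 'y \<Rightarrow> bool) \<Rightarrow> 'y set set \<Rightarrow> 'y set" where
  "joinY X Y R F = rpol X Y R (lpol X Y R (\<Union>F))"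

definition leX :: "'x set \<Rightarrow> 'y set \<Rightarrow> ('x \<Rightarrow> 'y \<Rightarrow> bool) \<Rightarrow> 'x \<Rightarrow> 'x \<Rightarrow> bool" where
  "leX X Y R x z \<longleftrightarrow> rpol X Y R {x} \<subseteq> rpol X Y R {z}"

definition leY :: "'x set \<Rightarrow> 'y set \<Rightarrow> ('x \<Rightarrow> 'y \<Rightarrow> bool) \<Rightarrow> 'y \<Rightarrow> 'y \<Rightarrow> bool" where
  "leY X Y R y v \<longleftrightarrow> lpol X Y R {y} \<subseteq> lpol X Y R {v}"

definition GammaY :: "'x set \<Rightarrow> 'y set \<Rightarrow> ('x \<Rightarrow> 'y \<Rightarrow> bool) \<Rightarrow> 'y \<Rightarrow> 'y set" where
  "GammaY X Y R w = {v \<in> Y. leY X Y R w v}"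

definition Tdual :: "'y set \<Rightarrow> ('x \<Rightarrow> 'y \<Rightarrow> bool) \<Rightarrow> ('y \<Rightarrow> 'x \<Rightarrow> 'y \<Rightarrow> bool) \<Rightarrow> 'x \<Rightarrow> 'x \<Rightarrow> 'y \<Rightarrow> bool" where
  "Tdual Y R T u x v \<longleftrightarrow> (\<forall>y\<in>Y. T y x v \<longrightarrow> R u y)"

definition implicative_frame ::
  "'x set \<Rightarrow> 'y set \<Rightarrow> ('x \<Rightarrow> 'y \<Rightarrow> bool) \<Rightarrow> ('y \<Rightarrow> 'x \<Rightarrow> 'y \<Rightarrow> bool) \<Rightarrow> bool" where
  "implicative_frame X Y R T \<longleftrightarrow>
     X \<noteq> {} \<and> Y \<noteq> {} \<and>
     (\<forall>x y. R x y \<longrightarrow> x \<in> X \<and> y \<in> Y) \<and>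
     (\<forall>y x v. T y x v \<longrightarrow> y \<in> Y \<and> x \<in> X \<and> v \<in> Y) \<and>
     \<comment> \<open>F0\<close>
     (\<forall>x\<in>X. \<forall>y\<in>Y. R x y \<longleftrightarrow> (\<forall>u\<in>X. Tdual Y R T u x y)) \<and>
     \<comment> \<open>F1\<close>
     (\<forall>x\<in>X. \<forall>z\<in>X. leX X Y R x z \<and> leX X Y R z x \<longrightarrow> x = z) \<and>
     (\<forall>y\<in>Y. \<forall>v\<in>Y. leY X Y R y v \<and> leY X Y R v y \<longrightarrow> y = v) \<and>
     \<comment> \<open>F2\<close>
     (\<forall>x\<in>X. \<forall>v\<in>Y. \<exists>w\<in>Y. {y \<in> Y. T y x v} = GammaY X Y R w) \<and>
     \<comment> \<open>F3\<close>
     (\<forall>y\<in>Y. \<forall>x\<in>X. \<forall>v\<in>Y. \<forall>x1\<in>X. \<forall>v1\<in>Y.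
        T y x v \<and> leX X Y R x1 x \<and> leY X Y R v1 v \<longrightarrow> T y x1 v1) \<and>
     \<comment> \<open>F4\<close>
     (\<forall>u\<in>X. \<forall>x\<in>X. \<forall>v\<in>Y.
        stable X Y R {x1 \<in> X. Tdual Y R T u x1 v} \<and>
        costable X Y R {v1 \<in> Y. Tdual Y R T u x v1})"

definition imp_op ::
  "'x set \<Rightarrow> 'y set \<Rightarrow> ('x \<Rightarrow> 'y \<Rightarrow> bool) \<Rightarrow> ('y \<Rightarrow> 'x \<Rightarrow> 'y \<Rightarrow> bool) \<Rightarrow> 'x set \<Rightarrow> 'y set \<Rightarrow> 'y set" where
  "imp_op X Y R T A B =
     rpol X Y R (lpol X Y R {y \<in> Y. \<exists>x\<in>A. \<exists>v\<in>B. T y x v})"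

end

theory Submission
  imports Defs
begin

text \<open>Write \<open>T[A, B]\<close> for the set of \<open>y\<close> with \<open>y T x v\<close> for some \<open>x \<in> A\<close>, \<open>v \<in> B\<close>, so that
  \<open>A \<blacktriangleright> B\<close> is the Galois closure of \<open>T[A, B]\<close>. The polar \<open>'T[A, B]\<close> consists of the \<open>u\<close> with
  \<open>u T' x v\<close> for all \<open>x \<in> A\<close>, \<open>v \<in> B\<close>. By (F4) the sections of \<open>T'\<close> are Galois sets, so this
  condition propagates from \<open>A \<times> B\<close> to the closures of \<open>A\<close> and \<open>B\<close>; hence \<open>\<blacktriangleright>\<close> does not see
  whether its arguments are closed. Since \<open>T[-, -]\<close> distributes over unions in both places and
  closing the members of a union does not change the closure of the union, the join of the
  \<open>A\<^sub>i \<blacktriangleright> B\<^sub>j\<close> equals the closure of \<open>T[\<Union>A\<^sub>i, \<Union>B\<^sub>j]\<close>, which is \<open>(\<Or>A\<^sub>i) \<blacktriangleright> (\<Or>B\<^sub>j)\<close>.\<close>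

lemma rpol_antimono: "U \<subseteq> U' \<Longrightarrow> rpol X Y R U' \<subseteq> rpol X Y R U"
  unfolding rpol_def by blast

lemma lpol_antimono: "V \<subseteq> V' \<Longrightarrow> lpol X Y R V' \<subseteq> lpol X Y R V"
  unfolding lpol_def by blast

lemma lpol_subset: "lpol X Y R V \<subseteq> X"
  unfolding lpol_def by blast

lemma rpol_subset: "rpol X Y R U \<subseteq> Y"
  unfolding rpol_def by blast

lemma subset_lpol_rpol: "U \<subseteq> X \<Longrightarrow> U \<subseteq> lpol X Y R (rpol X Y R U)"
  unfolding lpol_def rpol_def by blast

lemma subset_rpol_lpol: "V \<subseteq> Y \<Longrightarrow> V \<subseteq> rpol X Y R (lpol X Y R V)"
  unfolding lpol_def rpol_def by blast

lemma lpol_rpol_lpol: "V \<subseteq> Y \<Longrightarrow> lpol X Y R (rpol X Y R (lpol X Y R V)) = lpol X Y R V"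
  by (rule equalityI[OF lpol_antimono[OF subset_rpol_lpol] subset_lpol_rpol[OF lpol_subset]])

lemma lpol_Union: "lpol X Y R (\<Union>F) = {x \<in> X. \<forall>V\<in>F. x \<in> lpol X Y R V}"
  unfolding lpol_def by blast

lemma rpol_lpol_Union_rpol_lpol:
  assumes "\<And>V. V \<in> F \<Longrightarrow> V \<subseteq> Y"
  shows "rpol X Y R (lpol X Y R (\<Union>V\<in>F. rpol X Y R (lpol X Y R V))) = rpol X Y R (lpol X Y R (\<Union>F))"
  using assms by (simp add: lpol_Union lpol_rpol_lpol)

lemma stable_subset: "stable X Y R A \<Longrightarrow> A \<subseteq> X"
  unfolding stable_def by (metis lpol_subset)

lemma costable_subset: "costable X Y R B \<Longrightarrow> B \<subseteq> Y"
  unfolding costable_def by (metis rpol_subset)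

lemma lpol_rpol_subset_stable:
  assumes "stable X Y R A" and "U \<subseteq> A"
  shows "lpol X Y R (rpol X Y R U) \<subseteq> A"
proof -
  have "lpol X Y R (rpol X Y R U) \<subseteq> lpol X Y R (rpol X Y R A)"
    using \<open>U \<subseteq> A\<close> by (intro lpol_antimono rpol_antimono)
  also have "\<dots> = A"
    using \<open>stable X Y R A\<close> unfolding stable_def by (rule sym)
  finally show ?thesis .
qed

lemma rpol_lpol_subset_costable:
  assumes "costable X Y R B" and "V \<subseteq> B"
  shows "rpol X Y R (lpol X Y R V) \<subseteq> B"
proof -
  have "rpol X Y R (lpol X Y R V) \<subseteq> rpol X Y R (lpol X Y R B)"
    using \<open>V \<subseteq> B\<close> by (intro rpol_antimono lpol_antimono)
  also have "\<dots> = B"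
    using \<open>costable X Y R B\<close> unfolding costable_def by (rule sym)
  finally show ?thesis .
qed

lemma implicative_frame_stable_Tdual_section:
  assumes "implicative_frame X Y R T" and "u \<in> X" and "v \<in> Y"
  shows "stable X Y R {x1 \<in> X. Tdual Y R T u x1 v}"
  using assms unfolding implicative_frame_def by blast

lemma implicative_frame_costable_Tdual_section:
  assumes "implicative_frame X Y R T" and "u \<in> X" and "x \<in> X"
  shows "costable X Y R {v1 \<in> Y. Tdual Y R T u x v1}"
  using assms unfolding implicative_frame_def by blast

lemma Tdual_closures:
  assumes stable_sections: "\<And>v. v \<in> Y \<Longrightarrow> stable X Y R {x1 \<in> X. Tdual Y R T u x1 v}"
    and costable_sections: "\<And>x. x \<in> X \<Longrightarrow> costable X Y R {v1 \<in> Y. Tdual Y R T u x v1}"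
    and "A \<subseteq> X" and "B \<subseteq> Y"
    and Tdual_AB: "\<And>x v. x \<in> A \<Longrightarrow> v \<in> B \<Longrightarrow> Tdual Y R T u x v"
    and x: "x \<in> lpol X Y R (rpol X Y R A)" and v: "v \<in> rpol X Y R (lpol X Y R B)"
  shows "Tdual Y R T u x v"
proof -
  have Tdual_closure_B: "Tdual Y R T u x v1" if "v1 \<in> B" for v1
  proof -
    have "A \<subseteq> {x1 \<in> X. Tdual Y R T u x1 v1}"
      using \<open>A \<subseteq> X\<close> Tdual_AB \<open>v1 \<in> B\<close> by blast
    then have "lpol X Y R (rpol X Y R A) \<subseteq> {x1 \<in> X. Tdual Y R T u x1 v1}"
      using \<open>B \<subseteq> Y\<close> \<open>v1 \<in> B\<close> by (intro lpol_rpol_subset_stable stable_sections) auto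
    then show ?thesis
      using x by blast
  qed
  have "B \<subseteq> {v1 \<in> Y. Tdual Y R T u x v1}"
    using \<open>B \<subseteq> Y\<close> Tdual_closure_B by blast
  then have "rpol X Y R (lpol X Y R B) \<subseteq> {v1 \<in> Y. Tdual Y R T u x v1}"
    by (intro rpol_lpol_subset_costable costable_sections subsetD[OF lpol_subset x])
  then show ?thesis
    using v by blast
qed

definition T_image :: "'y set \<Rightarrow> ('y \<Rightarrow> 'x \<Rightarrow> 'y \<Rightarrow> bool) \<Rightarrow> 'x set \<Rightarrow> 'y set \<Rightarrow> 'y set" where
  "T_image Y T A B = {y \<in> Y. \<exists>x\<in>A. \<exists>v\<in>B. T y x v}"

lemma imp_op_T_image: "imp_op X Y R T A B = rpol X Y R (lpol X Y R (T_image Y T A B))"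
  unfolding imp_op_def T_image_def ..

lemma lpol_T_image:
  "lpol X Y R (T_image Y T A B) = {u \<in> X. \<forall>x\<in>A. \<forall>v\<in>B. Tdual Y R T u x v}"
  unfolding lpol_def T_image_def Tdual_def by blast

lemma T_image_UN:
  "T_image Y T (\<Union>(A ` I)) (\<Union>(B ` J)) = (\<Union>(i, j)\<in>I \<times> J. T_image Y T (A i) (B j))"
  unfolding T_image_def by blast

lemma imp_op_closures:
  assumes frame: "implicative_frame X Y R T" and "A \<subseteq> X" and "B \<subseteq> Y"
  shows "imp_op X Y R T (lpol X Y R (rpol X Y R A)) (rpol X Y R (lpol X Y R B)) = imp_op X Y R T A B"
proof -
  have "lpol X Y R (T_image Y T (lpol X Y R (rpol X Y R A)) (rpol X Y R (lpol X Y R B)))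
    = lpol X Y R (T_image Y T A B)"
  proof (intro set_eqI iffI)
    fix u
    assume "u \<in> lpol X Y R (T_image Y T (lpol X Y R (rpol X Y R A)) (rpol X Y R (lpol X Y R B)))"
    then show "u \<in> lpol X Y R (T_image Y T A B)"
      using subset_lpol_rpol[OF \<open>A \<subseteq> X\<close>] subset_rpol_lpol[OF \<open>B \<subseteq> Y\<close>]
      unfolding lpol_T_image by blast
  next
    fix u
    assume "u \<in> lpol X Y R (T_image Y T A B)"
    then have "u \<in> X" and "\<And>x v. x \<in> A \<Longrightarrow> v \<in> B \<Longrightarrow> Tdual Y R T u x v"
      unfolding lpol_T_image by blast+
    with Tdual_closures[OF implicative_frame_stable_Tdual_section[OF frame]
        implicative_frame_costable_Tdual_section[OF frame] assms(2,3)]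
    show "u \<in> lpol X Y R (T_image Y T (lpol X Y R (rpol X Y R A)) (rpol X Y R (lpol X Y R B)))"
      unfolding lpol_T_image by blast
  qed
  then show ?thesis
    unfolding imp_op_T_image by simp
qed

theorem lemma3p4:
  fixes X :: "'x set" and Y :: "'y set" and R :: "'x \<Rightarrow> 'y \<Rightarrow> bool"
    and T :: "'y \<Rightarrow> 'x \<Rightarrow> 'y \<Rightarrow> bool"
    and A :: "'i \<Rightarrow> 'x set" and B :: "'j \<Rightarrow> 'y set"
    and I :: "'i set" and J :: "'j set"
  assumes "implicative_frame X Y R T"
    and "\<forall>i\<in>I. stable X Y R (A i)"
    and "\<forall>j\<in>J. costable X Y R (B j)"
  shows "imp_op X Y R T (joinX X Y R (A ` I)) (joinY X Y R (B ` J)) =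
         joinY X Y R {imp_op X Y R T (A i) (B j) | i j. i \<in> I \<and> j \<in> J}"
proof -
  have "\<Union>(A ` I) \<subseteq> X"
    using assms(2) stable_subset by blast
  moreover have "\<Union>(B ` J) \<subseteq> Y"
    using assms(3) costable_subset by blast
  ultimately have "imp_op X Y R T (joinX X Y R (A ` I)) (joinY X Y R (B ` J))
      = imp_op X Y R T (\<Union>(A ` I)) (\<Union>(B ` J))"
    unfolding joinX_def joinY_def by (rule imp_op_closures[OF assms(1)])
  also have "\<dots> = rpol X Y R (lpol X Y R (\<Union>(i, j)\<in>I \<times> J. T_image Y T (A i) (B j)))"
    unfolding imp_op_T_image T_image_UN ..
  also have "\<dots> = rpol X Y R (lpol X Y R
      (\<Union>(i, j)\<in>I \<times> J. rpol X Y R (lpol X Y R (T_image Y T (A i) (B j)))))"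
    using rpol_lpol_Union_rpol_lpol[of "(\<lambda>(i, j). T_image Y T (A i) (B j)) ` (I \<times> J)" Y X R]
    by (auto simp: T_image_def split_def image_image)
  also have "\<dots> = joinY X Y R {imp_op X Y R T (A i) (B j) | i j. i \<in> I \<and> j \<in> J}"
    unfolding joinY_def imp_op_T_image by (rule arg_cong, rule arg_cong) blast
  finally show ?thesis .
qed

end
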